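(* Let $m\ge2$ be even, $n\ge2$, and let $g,h\in\mathbb{R}$ with $h\neq0$ and $g/h\notin\mathbb{Z}$. Let $\mathcal{A}$ be the Cauchy-Hankel tensor of order $m$ and dimension $n$ with entries $a_{i_1\cdots i_m}=\frac{1}{g+h(i_1+\cdots+i_m)}$, and let $f(x)=\mathcal{A}x^m$. Then $\mathcal{A}$ is positive definite if and only if $f$ is strictly monotonically increasing on $\mathbb{R}^n_+$.
   Context: $\mathcal{A}x^m=\sum_{i_1,\dots,i_m}a_{i_1\cdots i_m}x_{i_1}\cdots x_{i_m}$. Positive definite: $\mathcal{A}x^m>0$ for all nonzero $x\in\mathbb{R}^n$. $\mathbb{R}^n_+=\{x\in\mathbb{R}^n: x_i\ge0\ \forall i\}$; for vectors, $x\ge y$ means $x_i\ge y_i$ for all $i$. $f$ is strictly monotonically increasing on $\mathbb{R}^n_+$ if $f(x)>f(y)$ for all $x,y\in\mathbb{R}^n_+$ with $x\ge y$ and $x\neq y$. *)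

theory Defs
  imports Complex_Main "HOL-Library.FuncSet"
begin

text \<open>Vectors in R^n are represented as functions nat => real, only the
components 1..n being relevant. A tensor of order m and dimension n is a
function A assigning to each index tuple (i_1,...,i_m), i.e. a function
iota : {1..m} -> {1..n} (extensional), a real entry.\<close>

definition tensor_form :: "nat \<Rightarrow> nat \<Rightarrow> ((nat \<Rightarrow> nat) \<Rightarrow> real) \<Rightarrow> (nat \<Rightarrow> real) \<Rightarrow> real" where
  "tensor_form m n A x = (\<Sum>\<iota>\<in>{1..m} \<rightarrow>\<^sub>E {1..n}. A \<iota> * (\<Prod>k=1..m. x (\<iota> k)))"

definition cauchy_hankel :: "nat \<Rightarrow> real \<Rightarrow> real \<Rightarrow> (nat \<Rightarrow> nat) \<Rightarrow> real" where
  "cauchy_hankel m g h \<iota> = 1 / (g + h * real (\<Sum>k=1..m. \<iota> k))"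

definition nonzero_vec :: "nat \<Rightarrow> (nat \<Rightarrow> real) \<Rightarrow> bool" where
  "nonzero_vec n x \<longleftrightarrow> (\<exists>i\<in>{1..n}. x i \<noteq> 0)"

definition positive_definite :: "nat \<Rightarrow> nat \<Rightarrow> ((nat \<Rightarrow> nat) \<Rightarrow> real) \<Rightarrow> bool" where
  "positive_definite m n A \<longleftrightarrow> (\<forall>x. nonzero_vec n x \<longrightarrow> tensor_form m n A x > 0)"

definition nonneg_vec :: "nat \<Rightarrow> (nat \<Rightarrow> real) \<Rightarrow> bool" where
  "nonneg_vec n x \<longleftrightarrow> (\<forall>i\<in>{1..n}. 0 \<le> x i)"

definition strict_mono_incr_Rn_plus :: "nat \<Rightarrow> ((nat \<Rightarrow> real) \<Rightarrow> real) \<Rightarrow> bool" where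
  "strict_mono_incr_Rn_plus n f \<longleftrightarrow>
     (\<forall>x y. nonneg_vec n x \<and> nonneg_vec n y \<and> (\<forall>i\<in>{1..n}. y i \<le> x i)
            \<and> (\<exists>i\<in>{1..n}. x i \<noteq> y i) \<longrightarrow> f x > f y)"

end

theory Submission
  imports Defs "HOL-Analysis.Analysis"
begin

text \<open>Both conditions are equivalent to all entries of the tensor being positive. Each of them
forces the diagonal entries \<open>1 / (g + h m i)\<close> to be positive, and since \<open>g + h S\<close> is affine in
the index sum \<open>m \<le> S \<le> m n\<close>, positivity at \<open>i = 1\<close> and \<open>i = n\<close> gives positivity of every
entry. Positive entries make \<open>x \<mapsto> \<A>x\<^sup>m\<close> strictly increasing on the nonnegative orthant; and
they make the Cauchy-Hankel form equal to
\<open>\<integral>\<^sub>0\<^sup>1 t\<^bsup>g-1\<^esup> (\<Sum>\<^sub>i x\<^sub>i t\<^bsup>h i\<^esup>)\<^sup>m dt\<close>, which is positive for even \<open>m\<close> and \<open>x \<noteq> 0\<close> because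
a nontrivial generalized polynomial \<open>\<Sum>\<^sub>i x\<^sub>i t\<^bsup>h i\<^esup>\<close> has only finitely many zeros.\<close>

definition entrywise_positive :: "nat \<Rightarrow> nat \<Rightarrow> ((nat \<Rightarrow> nat) \<Rightarrow> real) \<Rightarrow> bool" where
  "entrywise_positive m n A \<longleftrightarrow> (\<forall>\<iota>\<in>{1..m} \<rightarrow>\<^sub>E {1..n}. A \<iota> > 0)"

lemma tensor_form_zero:
  assumes "m \<ge> 1"
  shows "tensor_form m n A (\<lambda>_. 0) = 0"
  unfolding tensor_form_def using assms by (simp add: zero_power)

lemma tensor_form_single_coordinate:
  assumes i: "i \<in> {1..n}"
  shows "tensor_form m n A (\<lambda>j. if j = i then c else 0) = A (\<lambda>k\<in>{1..m}. i) * c ^ m"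
proof -
  define D where "D = (\<lambda>k\<in>{1..m}. i)"
  have D: "D \<in> {1..m} \<rightarrow>\<^sub>E {1..n}"
    using i by (simp add: D_def)
  have "(\<Prod>k=1..m. (\<lambda>j. if j = i then c else 0) (\<iota> k)) = (if \<iota> = D then c ^ m else 0)"
    if "\<iota> \<in> {1..m} \<rightarrow>\<^sub>E {1..n}" for \<iota>
  proof (cases "\<iota> = D")
    case False
    then obtain k where k: "\<iota> k \<noteq> D k"
      by (auto simp: fun_eq_iff)
    have k_in: "k \<in> {1..m}"
    proof (rule ccontr)
      assume "k \<notin> {1..m}"
      then show False
        using k PiE_arb[OF that] by (auto simp: D_def)
    qed
    then have "\<iota> k \<noteq> i"
      using k by (simp add: D_def)
    with k_in have "(\<Prod>k=1..m. (\<lambda>j. if j = i then c else 0) (\<iota> k)) = 0"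
      by (intro prod_zero) auto
    with False show ?thesis
      by simp
  qed (simp add: D_def)
  then have "tensor_form m n A (\<lambda>j. if j = i then c else 0)
      = (\<Sum>\<iota>\<in>{1..m} \<rightarrow>\<^sub>E {1..n}. if \<iota> = D then A \<iota> * c ^ m else 0)"
    unfolding tensor_form_def by (intro sum.cong) auto
  also have "\<dots> = A D * c ^ m"
    using D by (simp add: sum.delta' finite_PiE)
  finally show ?thesis
    by (simp add: D_def)
qed

lemma positive_definite_imp_diagonal_pos:
  assumes "positive_definite m n A" and "i \<in> {1..n}"
  shows "A (\<lambda>k\<in>{1..m}. i) > 0"
proof -
  have "nonzero_vec n (\<lambda>j. if j = i then 1 else 0)"
    using assms(2) by (auto simp: nonzero_vec_def)
  then have "tensor_form m n A (\<lambda>j. if j = i then 1 else 0) > 0"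
    using assms(1) by (simp add: positive_definite_def)
  then show ?thesis
    using assms(2) tensor_form_single_coordinate[of i n m A 1] by simp
qed

lemma strict_mono_imp_diagonal_pos:
  assumes "strict_mono_incr_Rn_plus n (tensor_form m n A)" and "m \<ge> 1" and "i \<in> {1..n}"
  shows "A (\<lambda>k\<in>{1..m}. i) > 0"
proof -
  have "tensor_form m n A (\<lambda>j. if j = i then 1 else 0) > tensor_form m n A (\<lambda>_. 0)"
    using assms(1,3) unfolding strict_mono_incr_Rn_plus_def
    by (elim allE[of _ "\<lambda>j. if j = i then 1 else 0"] allE[of _ "\<lambda>_. 0"])
       (auto simp: nonneg_vec_def)
  then show ?thesis
    using assms(2,3) tensor_form_single_coordinate[of i n m A 1] tensor_form_zero by simp
qed

lemma entrywise_positive_imp_strict_mono: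
  assumes pos: "entrywise_positive m n A" and m: "m \<ge> 1"
  shows "strict_mono_incr_Rn_plus n (tensor_form m n A)"
  unfolding strict_mono_incr_Rn_plus_def
proof (intro allI impI)
  fix x y :: "nat \<Rightarrow> real"
  assume "nonneg_vec n x \<and> nonneg_vec n y \<and> (\<forall>i\<in>{1..n}. y i \<le> x i) \<and> (\<exists>i\<in>{1..n}. x i \<noteq> y i)"
  then have y0: "\<forall>i\<in>{1..n}. 0 \<le> y i" and yx: "\<forall>i\<in>{1..n}. y i \<le> x i"
    and "\<exists>j\<in>{1..n}. x j \<noteq> y j"
    by (auto simp: nonneg_vec_def)
  then obtain j where j: "j \<in> {1..n}" "x j \<noteq> y j"
    by blast
  then have "y j < x j"
    using yx by force
  define D where "D = (\<lambda>k\<in>{1..m}. j)"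
  have D: "D \<in> {1..m} \<rightarrow>\<^sub>E {1..n}"
    using j by (simp add: D_def)
  show "tensor_form m n A x > tensor_form m n A y"
    unfolding tensor_form_def
  proof (rule sum_strict_mono_ex1)
    show "\<forall>\<iota>\<in>{1..m} \<rightarrow>\<^sub>E {1..n}. A \<iota> * (\<Prod>k=1..m. y (\<iota> k)) \<le> A \<iota> * (\<Prod>k=1..m. x (\<iota> k))"
    proof
      fix \<iota> assume \<iota>: "\<iota> \<in> {1..m} \<rightarrow>\<^sub>E {1..n}"
      have "(\<Prod>k=1..m. y (\<iota> k)) \<le> (\<Prod>k=1..m. x (\<iota> k))"
        using \<iota> y0 yx by (intro prod_mono) (auto simp: PiE_iff)
      then show "A \<iota> * (\<Prod>k=1..m. y (\<iota> k)) \<le> A \<iota> * (\<Prod>k=1..m. x (\<iota> k))"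
        using pos \<iota> by (intro mult_left_mono) (auto simp: entrywise_positive_def)
    qed
    have "y j ^ m < x j ^ m"
      using \<open>y j < x j\<close> j y0 m by (intro power_strict_mono) auto
    then show "\<exists>\<iota>\<in>{1..m} \<rightarrow>\<^sub>E {1..n}. A \<iota> * (\<Prod>k=1..m. y (\<iota> k)) < A \<iota> * (\<Prod>k=1..m. x (\<iota> k))"
      using D pos by (intro bexI[OF _ D]) (simp add: entrywise_positive_def D_def)
  qed (simp add: finite_PiE)
qed

lemma index_sum_bounds:
  fixes \<iota> :: "nat \<Rightarrow> nat"
  assumes "\<iota> \<in> {1..m} \<rightarrow>\<^sub>E {1..n}"
  shows "m \<le> (\<Sum>k=1..m. \<iota> k)" and "(\<Sum>k=1..m. \<iota> k) \<le> m * n"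
proof -
  have "(\<Sum>k=1..m. 1) \<le> (\<Sum>k=1..m. \<iota> k)"
    by (rule sum_mono) (use assms in auto)
  moreover have "(\<Sum>k=1..m. \<iota> k) \<le> (\<Sum>k=1..m. n)"
    by (rule sum_mono) (use assms in auto)
  ultimately show "m \<le> (\<Sum>k=1..m. \<iota> k)" and "(\<Sum>k=1..m. \<iota> k) \<le> m * n"
    by simp_all
qed

lemma cauchy_hankel_diagonal:
  "cauchy_hankel m g h (\<lambda>k\<in>{1..m}. i) = 1 / (g + h * (real m * real i))"
proof -
  have "(\<Sum>k=1..m. (\<lambda>k\<in>{1..m}. i) k) = (\<Sum>k=1..m. i)"
    by (intro sum.cong) auto
  then show ?thesis
    by (simp add: cauchy_hankel_def)
qed

lemma cauchy_hankel_entrywise_positive_iff: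
  "entrywise_positive m n (cauchy_hankel m g h)
     \<longleftrightarrow> (\<forall>\<iota>\<in>{1..m} \<rightarrow>\<^sub>E {1..n}. g + h * real (\<Sum>k=1..m. \<iota> k) > 0)"
  by (simp add: entrywise_positive_def cauchy_hankel_def)

lemma cauchy_hankel_entrywise_positive:
  assumes n: "n \<ge> 1" and diag: "\<forall>i\<in>{1..n}. cauchy_hankel m g h (\<lambda>k\<in>{1..m}. i) > 0"
  shows "entrywise_positive m n (cauchy_hankel m g h)"
  unfolding cauchy_hankel_entrywise_positive_iff
proof
  fix \<iota> assume \<iota>: "\<iota> \<in> {1..m} \<rightarrow>\<^sub>E {1..n}"
  define S where "S = real (\<Sum>k=1..m. \<iota> k)"
  have S: "real m \<le> S" "S \<le> real m * real n"
    using index_sum_bounds[OF \<iota>] unfolding S_def of_nat_mult[symmetric] of_nat_le_iff by simp_all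
  have "cauchy_hankel m g h (\<lambda>k\<in>{1..m}. 1) > 0" and "cauchy_hankel m g h (\<lambda>k\<in>{1..m}. n) > 0"
    using diag n by auto
  then have lo: "g + h * real m > 0" and hi: "g + h * (real m * real n) > 0"
    using cauchy_hankel_diagonal[of m g h 1] cauchy_hankel_diagonal[of m g h n] by simp_all
  consider "h \<ge> 0" | "h \<le> 0"
    by linarith
  then have "g + h * S > 0"
  proof cases
    case 1
    then show ?thesis using lo S mult_left_mono[of "real m" S h] by linarith
  next
    case 2
    then show ?thesis using hi S mult_left_mono_neg[of S "real m * real n" h] by linarith
  qed
  then show "g + h * real (\<Sum>k=1..m. \<iota> k) > 0"
    by (simp add: S_def)
qed

lemma power_sum_PiE:
  fixes f :: "'a \<Rightarrow> 'b :: comm_semiring_1"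
  assumes "finite I"
  shows "(\<Sum>i\<in>I. f i) ^ m = (\<Sum>\<iota>\<in>{1..m} \<rightarrow>\<^sub>E I. \<Prod>k=1..m. f (\<iota> k))"
proof -
  have "(\<Sum>i\<in>I. f i) ^ m = (\<Prod>k\<in>{1..m}. \<Sum>i\<in>I. f i)"
    by simp
  also have "\<dots> = (\<Sum>\<iota>\<in>{1..m} \<rightarrow>\<^sub>E I. \<Prod>k=1..m. f (\<iota> k))"
    using assms prod_sum_PiE[of "{1..m}" "\<lambda>_. I" "\<lambda>_ i. f i"] by simp
  finally show ?thesis .
qed

lemma powr_sum_eq_zero_imp_coeffs_zero:
  fixes x :: "nat \<Rightarrow> real"
  assumes S: "infinite S" "S \<subseteq> {0<..}" and h: "h \<noteq> 0"
    and zero: "\<forall>t\<in>S. (\<Sum>i=1..n. x i * t powr (h * real i)) = 0"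
  shows "\<forall>i\<in>{1..n}. x i = 0"
proof -
  define c where "c i = (if i = 0 then 0 else x i)" for i
  have roots: "(\<lambda>t. t powr h) ` S \<subseteq> {u. (\<Sum>i\<le>n. c i * u ^ i) = 0}"
  proof clarify
    fix t assume t: "t \<in> S"
    have "{..n} = insert 0 {1..n}"
      by auto
    then have "(\<Sum>i\<le>n. c i * (t powr h) ^ i) = (\<Sum>i=1..n. x i * t powr (h * real i))"
      using t S(2) by (auto simp: c_def powr_power mult.commute intro!: sum.cong)
    then show "(\<Sum>i\<le>n. c i * (t powr h) ^ i) = 0"
      using zero t by simp
  qed
  have "inj_on (\<lambda>t. t powr h) S"
  proof (rule inj_onI)
    fix s t assume "s \<in> S" "t \<in> S" "s powr h = t powr h"
    then have "(s powr h) powr (1 / h) = (t powr h) powr (1 / h)"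
      by simp
    moreover have "s > 0" "t > 0"
      using S(2) \<open>s \<in> S\<close> \<open>t \<in> S\<close> by auto
    ultimately show "s = t"
      using h by (simp add: powr_powr)
  qed
  then have "infinite {u. (\<Sum>i\<le>n. c i * u ^ i) = 0}"
    using S(1) roots finite_subset finite_image_iff by metis
  then show ?thesis
    using polyfun_finite_roots by (fastforce simp: c_def)
qed

lemma cauchy_hankel_form_has_integral:
  assumes pos: "entrywise_positive m n (cauchy_hankel m g h)"
  shows "((\<lambda>t. t powr (g - 1) * (\<Sum>i=1..n. x i * t powr (h * real i)) ^ m)
           has_integral tensor_form m n (cauchy_hankel m g h) x) {0..1}"
proof -
  define e where "e \<iota> = g - 1 + h * real (\<Sum>k=1..m. \<iota> k)" for \<iota> :: "nat \<Rightarrow> nat"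
  have expand: "t powr (g - 1) * (\<Sum>i=1..n. x i * t powr (h * real i)) ^ m
      = (\<Sum>\<iota>\<in>{1..m} \<rightarrow>\<^sub>E {1..n}. (\<Prod>k=1..m. x (\<iota> k)) * t powr e \<iota>)"
    if "t \<in> {0..1} - {0}" for t
  proof -
    have t: "t > 0"
      using that by auto
    have "(\<Prod>k=1..m. t powr (h * real (\<iota> k))) = t powr (h * real (\<Sum>k=1..m. \<iota> k))" for \<iota>
      using t by (simp add: powr_sum sum_distrib_left)
    then show ?thesis
      unfolding power_sum_PiE[OF finite_atLeastAtMost] sum_distrib_left prod.distrib e_def
      using t by (intro sum.cong refl) (simp add: powr_add mult_ac)
  qed
  have "((\<lambda>t. \<Sum>\<iota>\<in>{1..m} \<rightarrow>\<^sub>E {1..n}. (\<Prod>k=1..m. x (\<iota> k)) * t powr e \<iota>)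
      has_integral (\<Sum>\<iota>\<in>{1..m} \<rightarrow>\<^sub>E {1..n}. (\<Prod>k=1..m. x (\<iota> k)) * (1 / (e \<iota> + 1)))) {0..1}"
  proof (intro has_integral_sum has_integral_mult_right)
    fix \<iota> assume "\<iota> \<in> {1..m} \<rightarrow>\<^sub>E {1..n}"
    then have "e \<iota> > -1"
      using pos by (simp add: cauchy_hankel_entrywise_positive_iff e_def)
    then show "((\<lambda>t. t powr e \<iota>) has_integral 1 / (e \<iota> + 1)) {0..1}"
      using has_integral_powr_from_0[of "e \<iota>" 1] by simp
  qed (simp add: finite_PiE)
  then have "((\<lambda>t. t powr (g - 1) * (\<Sum>i=1..n. x i * t powr (h * real i)) ^ m)
      has_integral (\<Sum>\<iota>\<in>{1..m} \<rightarrow>\<^sub>E {1..n}. (\<Prod>k=1..m. x (\<iota> k)) * (1 / (e \<iota> + 1)))) {0..1}"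
    by (rule has_integral_spike[OF negligible_sing[of 0], rotated]) (rule expand)
  then show ?thesis
    unfolding tensor_form_def cauchy_hankel_def e_def by (simp add: mult.commute)
qed

lemma cauchy_hankel_positive_definite:
  assumes pos: "entrywise_positive m n (cauchy_hankel m g h)" and "even m" and h: "h \<noteq> 0"
  shows "positive_definite m n (cauchy_hankel m g h)"
  unfolding positive_definite_def
proof (intro allI impI)
  fix x assume nz: "nonzero_vec n x"
  define P where "P t = (\<Sum>i=1..n. x i * t powr (h * real i))" for t
  define F where "F t = t powr (g - 1) * P t ^ m" for t
  have F_int: "(F has_integral tensor_form m n (cauchy_hankel m g h) x) {0..1}"
    unfolding F_def P_def by (rule cauchy_hankel_form_has_integral[OF pos])
  have F_nonneg: "0 \<le> F t" for t
    unfolding F_def using \<open>even m\<close> by (simp add: zero_le_even_power)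
  have F_cont: "continuous_on {1/2..1} F"
    unfolding F_def P_def by (intro continuous_intros) auto
  then have F_int_half: "(F has_integral integral {1/2..1} F) {1/2..1}"
    using integrable_continuous_interval has_integral_integral by blast
  have "integral {1/2..1} F \<noteq> 0"
  proof
    assume "integral {1/2..1} F = 0"
    then have "F t = 0" if "t \<in> {1/2..1}" for t
      using F_int_half F_cont F_nonneg that
      by (intro has_integral_0_cbox_imp_0[of "1/2" 1 F]) (auto simp: cbox_interval)
    then have "\<forall>t\<in>{1/2..1}. P t = 0"
      by (auto simp: F_def)
    moreover have "infinite {1/2..1::real}" and "{1/2..1::real} \<subseteq> {0<..}"
      by auto
    ultimately have "\<forall>i\<in>{1..n}. x i = 0"
      using powr_sum_eq_zero_imp_coeffs_zero[of "{1/2..1}" h x n] h unfolding P_def by blast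
    then show False
      using nz by (simp add: nonzero_vec_def)
  qed
  moreover have "integral {1/2..1} F \<le> integral {0..1} F"
    using F_int_half F_int F_nonneg by (intro integral_subset_le) auto
  moreover have "integral {1/2..1} F \<ge> 0"
    using F_int_half F_nonneg by (intro integral_nonneg) auto
  ultimately show "tensor_form m n (cauchy_hankel m g h) x > 0"
    using F_int by (simp add: integral_unique)
qed

theorem theorem5p2:
  fixes m n :: nat and g h :: real
  assumes "even m" and "m \<ge> 2" and "n \<ge> 2"
    and "h \<noteq> 0" and "g / h \<notin> \<int>"
  shows "positive_definite m n (cauchy_hankel m g h)
     \<longleftrightarrow> strict_mono_incr_Rn_plus n (tensor_form m n (cauchy_hankel m g h))"
proof
  assume "positive_definite m n (cauchy_hankel m g h)"
  then have "entrywise_positive m n (cauchy_hankel m g h)"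
    using assms(3) positive_definite_imp_diagonal_pos cauchy_hankel_entrywise_positive by simp
  then show "strict_mono_incr_Rn_plus n (tensor_form m n (cauchy_hankel m g h))"
    using assms(2) entrywise_positive_imp_strict_mono by simp
next
  assume "strict_mono_incr_Rn_plus n (tensor_form m n (cauchy_hankel m g h))"
  then have "entrywise_positive m n (cauchy_hankel m g h)"
    using assms(2,3) strict_mono_imp_diagonal_pos cauchy_hankel_entrywise_positive by simp
  then show "positive_definite m n (cauchy_hankel m g h)"
    using assms(1,4) cauchy_hankel_positive_definite by blast
qed

end
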